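(* Assume Conditions $\mathcal M$. Then for every $p>0$ there exist constants $c>0$ and $d>0$ such that for all $\varepsilon\in(0,1]$ and all $u\in\mathbb U_\varepsilon$ with $|u|\ge d$, $$\mathbf E_{\vartheta_0}\hat Z_\varepsilon(u)^p\le e^{-cu^2}.$$
   Context: Fix $T>0$, $0<\alpha<\beta<T$, $\Theta=(\alpha,\beta)$, and a true value $\vartheta_0\in\Theta$. The observed process is $X_t=\int_0^tS(\vartheta_0,s)\,ds+\varepsilon W_t$, $0\le t\le T$, where $W$ is a standard Wiener process, $\varepsilon\in(0,1]$ and $S(\vartheta_0,\cdot)\in L^2(0,T)$. The statistician uses the misspecified model ${\rm d}X_t=M(\vartheta,t){\rm d}t+\varepsilon{\rm d}W_t$ with $M(\vartheta,t)=h(t)\mathbf 1_{\{t<\vartheta\}}+g(t)\mathbf 1_{\{t\ge\vartheta\}}$, where $h,g$ are bounded measurable functions on $[0,T]$. The pseudo-likelihood is $V(\vartheta,X^T)=\exp\{\varepsilon^{-2}\int_0^TM(\vartheta,t){\rm d}X_t-\frac1{2\varepsilon^2}\int_0^TM(\vartheta,t)^2{\rm d}t\}$. Put $\delta(t)=h(t)-g(t)$, $\Phi(\vartheta)=\int_0^T[M(\vartheta,t)-S(\vartheta_0,t)]^2{\rm d}t$, and $$\ddot\Phi(\vartheta)=2[h(\vartheta)-S(\vartheta_0,\vartheta)][h'(\vartheta)-\partial_tS(\vartheta_0,\vartheta)]-2[g(\vartheta)-S(\vartheta_0,\vartheta)][g'(\vartheta)-\partial_tS(\vartheta_0,\vartheta)]$$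 (derivatives in $t$). Conditions $\mathcal M$: (1) $\inf_{t\in\Theta}\delta(t)>0$; (2) $\Phi$ has a unique point of minimum $\hat\vartheta$ over $\Theta$; (3) $h,g$ and $t\mapsto S(\vartheta_0,t)$ are continuously differentiable in $t$ on $\Theta$; (4) $\inf_{\vartheta\in\Theta}\ddot\Phi(\vartheta)>0$. Define $Z_\varepsilon(u)=V(\hat\vartheta+\varepsilon^{2/3}u,X^T)/V(\hat\vartheta,X^T)$ for $u\in\mathbb U_\varepsilon=((\alpha-\hat\vartheta)\varepsilon^{-2/3},(\beta-\hat\vartheta)\varepsilon^{-2/3})$, and $\hat Z_\varepsilon(u)=Z_\varepsilon(u)^{\varepsilon^{2/3}}$. *)

theory Defs
  imports "HOL-Probability.Probability"
begin

definition wiener_process :: "'a measure \<Rightarrow> (real \<Rightarrow> 'a \<Rightarrow> real) \<Rightarrow> bool" where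
  "wiener_process P W \<longleftrightarrow> prob_space P \<and> (\<forall>t. W t \<in> borel_measurable P)
    \<and> (AE \<omega> in P. W 0 \<omega> = 0)
    \<and> (AE \<omega> in P. continuous_on {0..} (\<lambda>t. W t \<omega>))
    \<and> (\<forall>s t. 0 \<le> s \<and> s < t \<longrightarrow>
          distributed P lborel (\<lambda>\<omega>. W t \<omega> - W s \<omega>) (normal_density 0 (sqrt (t - s))))
    \<and> (\<forall>ts::real list. sorted ts \<and> (\<forall>t\<in>set ts. 0 \<le> t) \<longrightarrow>
          prob_space.indep_vars P (\<lambda>_. borel) (\<lambda>i \<omega>. W (ts ! Suc i) \<omega> - W (ts ! i) \<omega>) {..<length ts - 1})"

definition admissible_partition :: "real \<Rightarrow> real list \<Rightarrow> real list \<Rightarrow> bool" where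
  "admissible_partition T ts cs \<longleftrightarrow> sorted_wrt (<) ts \<and> length ts \<ge> 2 \<and> hd ts = 0 \<and> last ts = T
     \<and> length cs = length ts - 1"

definition step_fun :: "real list \<Rightarrow> real list \<Rightarrow> real \<Rightarrow> real" where
  "step_fun ts cs t = (\<Sum>i<length ts - 1. cs ! i * indicator {ts ! i ..< ts ! Suc i} t)"

definition step_wiener :: "(real \<Rightarrow> 'a \<Rightarrow> real) \<Rightarrow> real list \<Rightarrow> real list \<Rightarrow> 'a \<Rightarrow> real" where
  "step_wiener W ts cs \<omega> = (\<Sum>i<length ts - 1. cs ! i * (W (ts ! Suc i) \<omega> - W (ts ! i) \<omega>))"

text \<open>I is (a version of) the Wiener integral of the deterministic function f over [0,T]:
  the L2(P)-limit of Wiener integrals of step functions converging to f in L2(0,T).\<close>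
definition wiener_integral ::
  "'a measure \<Rightarrow> (real \<Rightarrow> 'a \<Rightarrow> real) \<Rightarrow> real \<Rightarrow> (real \<Rightarrow> real) \<Rightarrow> ('a \<Rightarrow> real) \<Rightarrow> bool" where
  "wiener_integral P W T f I \<longleftrightarrow> I \<in> borel_measurable P \<and>
    (\<exists>tss css. (\<forall>n. admissible_partition T (tss n) (css n)) \<and>
      ((\<lambda>n. \<integral>\<^sup>+ t. indicator {0..T} t * ennreal ((step_fun (tss n) (css n) t - f t)^2) \<partial>lborel)
          \<longlonglongrightarrow> 0) \<and>
      ((\<lambda>n. \<integral>\<^sup>+ \<omega>. ennreal ((step_wiener W (tss n) (css n) \<omega> - I \<omega>)^2) \<partial>P) \<longlonglongrightarrow> 0))"

definition cp_model :: "(real \<Rightarrow> real) \<Rightarrow> (real \<Rightarrow> real) \<Rightarrow> real \<Rightarrow> real \<Rightarrow> real" where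
  "cp_model h g \<theta> t = (if t < \<theta> then h t else g t)"

definition Phi :: "real \<Rightarrow> (real \<Rightarrow> real) \<Rightarrow> (real \<Rightarrow> real) \<Rightarrow> (real \<Rightarrow> real) \<Rightarrow> real \<Rightarrow> real" where
  "Phi T h g S0 \<theta> = (LINT t:{0..T}|lborel. (cp_model h g \<theta> t - S0 t)^2)"

definition Phi_dd :: "(real \<Rightarrow> real) \<Rightarrow> (real \<Rightarrow> real) \<Rightarrow> (real \<Rightarrow> real) \<Rightarrow> (real \<Rightarrow> real)
    \<Rightarrow> (real \<Rightarrow> real) \<Rightarrow> (real \<Rightarrow> real) \<Rightarrow> real \<Rightarrow> real" where
  "Phi_dd h h' g g' S0 S0' \<theta> = 2 * (h \<theta> - S0 \<theta>) * (h' \<theta> - S0' \<theta>) - 2 * (g \<theta> - S0 \<theta>) * (g' \<theta> - S0' \<theta>)"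

text \<open>Pseudo-likelihood V(theta, X^T), where int M(theta,t) dX_t
  = int M(theta,t) S0(t) dt + eps * I theta, with I theta the Wiener integral of M(theta,.).\<close>
definition pseudo_lik :: "real \<Rightarrow> (real \<Rightarrow> real) \<Rightarrow> (real \<Rightarrow> real) \<Rightarrow> (real \<Rightarrow> real) \<Rightarrow> real
    \<Rightarrow> (real \<Rightarrow> 'a \<Rightarrow> real) \<Rightarrow> real \<Rightarrow> 'a \<Rightarrow> real" where
  "pseudo_lik T h g S0 \<epsilon> I \<theta> \<omega> =
     exp (1 / \<epsilon>^2 * ((LINT t:{0..T}|lborel. cp_model h g \<theta> t * S0 t) + \<epsilon> * I \<theta> \<omega>)
          - 1 / (2 * \<epsilon>^2) * (LINT t:{0..T}|lborel. (cp_model h g \<theta> t)^2))"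

definition Z_eps where
  "Z_eps T h g S0 \<epsilon> I \<theta>h u \<omega> =
     pseudo_lik T h g S0 \<epsilon> I (\<theta>h + \<epsilon> powr (2/3) * u) \<omega> / pseudo_lik T h g S0 \<epsilon> I \<theta>h \<omega>"

definition Z_hat where
  "Z_hat T h g S0 \<epsilon> I \<theta>h u \<omega> = (Z_eps T h g S0 \<epsilon> I \<theta>h u \<omega>) powr (\<epsilon> powr (2/3))"

end

theory Submission
  imports Defs
begin

text \<open>Write \<open>\<theta> = \<theta>h + \<epsilon> powr (2/3) * u\<close>. Then
  \<open>Z_hat(u) powr p = exp (- p * \<epsilon> powr (-4/3) / 2 * (\<Phi> \<theta> - \<Phi> \<theta>h) + p * \<epsilon> powr (-1/3) * (I \<theta> - I \<theta>h))\<close>.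
  The difference \<open>I \<theta> - I \<theta>h\<close> is the Wiener integral of \<open>M(\<theta>,.) - M(\<theta>h,.)\<close>, a centred Gaussian
  variable whose variance is at most \<open>(2B)\<^sup>2 * |\<theta> - \<theta>h|\<close> when \<open>|h|, |g| \<le> B\<close>; so the random part
  contributes at most \<open>exp (4 p\<^sup>2 B\<^sup>2 |u|)\<close>. The derivative \<open>(h - S0)\<^sup>2 - (g - S0)\<^sup>2\<close> of \<open>\<Phi>\<close>
  increases at rate at least \<open>\<kappa>\<close> and changes sign at the minimiser \<open>\<theta>h\<close>, whence
  \<open>\<Phi> \<theta> - \<Phi> \<theta>h \<ge> \<kappa>/8 * (\<theta> - \<theta>h)\<^sup>2\<close> and the deterministic part is at most \<open>- p \<kappa> u\<^sup>2 / 16\<close>.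
  For \<open>|u| \<ge> 128 p B\<^sup>2 / \<kappa>\<close> the quadratic term dominates.

  The Gaussian bound is exact for step functions, by independence of the increments over a
  common refinement of the two partitions, and passes to Wiener integrals through an almost
  everywhere convergent subsequence and Fatou's lemma.\<close>

section \<open>Step functions on partitions\<close>

lemma strict_sorted_nth_mono:
  "sorted_wrt (<) xs \<Longrightarrow> i \<le> j \<Longrightarrow> j < length xs \<Longrightarrow> xs ! i \<le> (xs ! j :: 'a::linorder)"
  by (metis sorted_nth_mono strict_sorted_imp_sorted)

lemma strict_sorted_nth_less_imp_less:
  "sorted_wrt (<) xs \<Longrightarrow> xs ! i < (xs ! j :: 'a::linorder) \<Longrightarrow> i < length xs \<Longrightarrow> i < j"
  by (meson leI linorder_not_less strict_sorted_nth_mono)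

lemma step_fun_eq_nth:
  assumes ts: "sorted_wrt (<) ts" and i: "i < length ts - 1" and t: "ts ! i \<le> t" "t < ts ! Suc i"
  shows "step_fun ts cs t = cs ! i"
proof -
  have "t \<notin> {ts ! k..<ts ! Suc k}" if k: "k < length ts - 1" "k \<noteq> i" for k
  proof (cases "k < i")
    case True
    then have "ts ! Suc k \<le> ts ! i" using strict_sorted_nth_mono[OF ts, of "Suc k" i] i by auto
    with t show ?thesis by auto
  next
    case False
    then have "ts ! Suc i \<le> ts ! k" using strict_sorted_nth_mono[OF ts, of "Suc i" k] k by auto
    with t show ?thesis by auto
  qed
  then have "step_fun ts cs t = (\<Sum>k\<in>{i}. cs ! k * indicator {ts ! k..<ts ! Suc k} t)"
    unfolding step_fun_def by (intro sum.mono_neutral_right) (use i in auto)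
  with t show ?thesis by simp
qed

lemma admissible_partitionD:
  assumes "admissible_partition T ts cs"
  shows "sorted_wrt (<) ts" "length ts \<ge> 2"
    "ts ! 0 = 0" "ts ! (length ts - 1) = T" "set ts \<subseteq> {0..T}"
proof -
  show ts: "sorted_wrt (<) ts" and l: "length ts \<ge> 2"
    using assms by (auto simp: admissible_partition_def)
  show hd: "ts ! 0 = 0"
    using assms l by (cases ts) (auto simp: admissible_partition_def)
  show last: "ts ! (length ts - 1) = T"
    using assms l by (cases "ts = []") (auto simp: admissible_partition_def last_conv_nth)
  show "set ts \<subseteq> {0..T}"
    using strict_sorted_nth_mono[OF ts, of 0] strict_sorted_nth_mono[OF ts, of _ "length ts - 1"] hd last
    by (fastforce simp: in_set_conv_nth)
qed

lemma admissible_partition_cell: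
  assumes "admissible_partition T ts cs" "0 \<le> t" "t < T"
  obtains i where "i < length ts - 1" "ts ! i \<le> t" "t < ts ! Suc i"
proof -
  note ts = admissible_partitionD[OF assms(1)]
  define K where "K = {k. k < length ts - 1 \<and> ts ! k \<le> t}"
  have "finite K" "0 \<in> K" using ts assms unfolding K_def by auto
  then have i: "Max K \<in> K" "\<And>k. k \<in> K \<Longrightarrow> k \<le> Max K" by (auto intro: Max_in)
  have "t < ts ! Suc (Max K)"
  proof (cases "Suc (Max K) < length ts - 1")
    case True
    then show ?thesis using i(2)[of "Suc (Max K)"] unfolding K_def by fastforce
  next
    case False
    then have "Suc (Max K) = length ts - 1" using i(1) unfolding K_def by auto
    then show ?thesis using ts assms by simp
  qed
  then show thesis using that i(1) unfolding K_def by blast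
qed

locale partition_refinement =
  fixes T :: real and ts cs us :: "real list"
  assumes admissible: "admissible_partition T ts cs"
    and us_sorted: "sorted_wrt (<) us" and us_range: "set us \<subseteq> {0..T}" and refines: "set ts \<subseteq> set us"
begin

lemma step_fun_const_on_cell:
  assumes j: "Suc j < length us" and t: "us ! j \<le> t" "t < us ! Suc j"
  shows "step_fun ts cs t = step_fun ts cs (us ! j)"
proof -
  note ts = admissible_partitionD[OF admissible]
  have "us ! j < us ! Suc j" using sorted_wrt_nth_less[OF us_sorted] j by auto
  moreover have "us ! j \<in> set us" "us ! Suc j \<in> set us" using j by auto
  ultimately have "0 \<le> us ! j" "us ! j < T" using us_range by fastforce+
  then obtain i where i: "i < length ts - 1" "ts ! i \<le> us ! j" "us ! j < ts ! Suc i"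
    using admissible_partition_cell[OF admissible] by blast
  have "ts ! Suc i \<in> set us" using refines i(1) by auto
  then obtain k where k: "k < length us" "us ! k = ts ! Suc i" by (auto simp: in_set_conv_nth)
  have "j < k" using strict_sorted_nth_less_imp_less[OF us_sorted, of j k] k i j by auto
  then have "t < ts ! Suc i" using strict_sorted_nth_mono[OF us_sorted, of "Suc j" k] k t by auto
  then show ?thesis using step_fun_eq_nth[OF ts(1) i(1)] i t by auto
qed

lemma refinement_index:
  obtains idx where "\<And>i. i < length ts \<Longrightarrow> idx i < length us \<and> us ! idx i = ts ! i"
    "\<And>i i'. i < i' \<Longrightarrow> i' < length ts \<Longrightarrow> idx i < idx i'"
    "idx 0 = 0" "idx (length ts - 1) = length us - 1"
proof -
  note ts = admissible_partitionD[OF admissible]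
  have "\<exists>j. j < length us \<and> us ! j = ts ! i" if "i < length ts" for i
    using refines nth_mem[OF that] in_set_conv_nth[of "ts ! i" us] by blast
  then obtain idx where idx: "\<And>i. i < length ts \<Longrightarrow> idx i < length us \<and> us ! idx i = ts ! i"
    by metis
  have idx_mono: "idx i < idx i'" if "i < i'" "i' < length ts" for i i'
  proof -
    have "ts ! i < ts ! i'" using sorted_wrt_nth_less[OF ts(1) that] .
    then show ?thesis
      using idx[of i] idx[of i'] that strict_sorted_nth_less_imp_less[OF us_sorted] by auto
  qed
  have range: "0 \<le> us ! j \<and> us ! j \<le> T" if "j < length us" for j
    using us_range nth_mem[OF that] by auto
  have n: "0 < length ts" "length ts - 1 < length ts" using ts(2) by auto
  have idx_0: "idx 0 = 0"
  proof (rule ccontr)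
    assume "idx 0 \<noteq> 0"
    then have "us ! 0 < us ! idx 0"
      using sorted_wrt_nth_less[OF us_sorted, of 0 "idx 0"] idx[OF n(1)] by simp
    then show False using idx[OF n(1)] ts(3) range[of 0] by fastforce
  qed
  have idx_n: "idx (length ts - 1) = length us - 1"
  proof (rule ccontr)
    assume "idx (length ts - 1) \<noteq> length us - 1"
    then have "us ! idx (length ts - 1) < us ! (length us - 1)"
      using sorted_wrt_nth_less[OF us_sorted, of "idx (length ts - 1)" "length us - 1"] idx[OF n(2)]
      by fastforce
    then show False using idx[OF n(2)] ts(4) range[of "length us - 1"] by fastforce
  qed
  show thesis by (intro that[of idx] idx idx_mono idx_0 idx_n)
qed

lemma sum_increments_refine:
  "(\<Sum>i<length ts - 1. cs ! i * (w (ts ! Suc i) - w (ts ! i)))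
     = (\<Sum>j<length us - 1. step_fun ts cs (us ! j) * (w (us ! Suc j) - w (us ! j)))"
proof -
  note ts = admissible_partitionD[OF admissible]
  obtain idx where idx: "\<And>i. i < length ts \<Longrightarrow> idx i < length us \<and> us ! idx i = ts ! i"
    and idx_mono: "\<And>i i'. i < i' \<Longrightarrow> i' < length ts \<Longrightarrow> idx i < idx i'"
    and idx_0: "idx 0 = 0" and idx_n: "idx (length ts - 1) = length us - 1"
    using refinement_index by blast
  define n where "n = length ts - 1"
  have "(\<Sum>j<idx k. step_fun ts cs (us ! j) * (w (us ! Suc j) - w (us ! j)))
      = (\<Sum>i<k. cs ! i * (w (ts ! Suc i) - w (ts ! i)))" if "k \<le> n" for k
    using that
  proof (induction k)
    case (Suc k)
    have k: "k < length ts - 1" "Suc k < length ts" using Suc.prems n_def by auto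
    have le: "idx k \<le> idx (Suc k)" using idx_mono[of k "Suc k"] k by auto
    have cell: "step_fun ts cs (us ! j) = cs ! k" if j: "j \<in> {idx k..<idx (Suc k)}" for j
    proof -
      have "us ! idx k \<le> us ! j"
        using j idx[of "Suc k"] k strict_sorted_nth_mono[OF us_sorted, of "idx k" j] by auto
      moreover have "us ! j < us ! idx (Suc k)"
        using j idx[of "Suc k"] k sorted_wrt_nth_less[OF us_sorted, of j "idx (Suc k)"] by auto
      ultimately show ?thesis using step_fun_eq_nth[OF ts(1) k(1)] idx[of k] idx[of "Suc k"] k by auto
    qed
    have "(\<Sum>j<idx (Suc k). step_fun ts cs (us ! j) * (w (us ! Suc j) - w (us ! j)))
        = (\<Sum>j<idx k. step_fun ts cs (us ! j) * (w (us ! Suc j) - w (us ! j)))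
          + (\<Sum>j=idx k..<idx (Suc k). step_fun ts cs (us ! j) * (w (us ! Suc j) - w (us ! j)))"
      using le by (simp add: lessThan_atLeast0 sum.atLeastLessThan_concat)
    also have "(\<Sum>j=idx k..<idx (Suc k). step_fun ts cs (us ! j) * (w (us ! Suc j) - w (us ! j)))
        = (\<Sum>j=idx k..<idx (Suc k). cs ! k * (w (us ! Suc j) - w (us ! j)))"
      by (rule sum.cong) (simp_all add: cell)
    also have "(\<Sum>j=idx k..<idx (Suc k). cs ! k * (w (us ! Suc j) - w (us ! j)))
        = cs ! k * (w (ts ! Suc k) - w (ts ! k))"
      using sum_Suc_diff'[OF le, of "\<lambda>j. w (us ! j)"] idx[of k] idx[of "Suc k"] k
      by (simp add: sum_distrib_left[symmetric])
    finally show ?case using Suc by simp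
  qed (simp add: idx_0)
  from this[of n] show ?thesis using idx_n unfolding n_def by simp
qed

end

lemma admissible_partition_common_refinement:
  assumes "admissible_partition T ts1 cs1" "admissible_partition T ts2 cs2"
  obtains us where "sorted_wrt (<) us" "set ts1 \<subseteq> set us" "set ts2 \<subseteq> set us"
    "set us \<subseteq> {0..T}" "0 < length us" "us ! 0 = 0" "us ! (length us - 1) = T"
proof -
  note ts1 = admissible_partitionD[OF assms(1)] and ts2 = admissible_partitionD[OF assms(2)]
  define us where "us = sorted_list_of_set (set ts1 \<union> set ts2)"
  have us: "sorted_wrt (<) us" "set us = set ts1 \<union> set ts2"
    unfolding us_def by (auto intro: strict_sorted_list_of_set)
  have range: "set us \<subseteq> {0..T}" using us(2) ts1(5) ts2(5) by auto
  have l: "0 < length ts1" "length ts1 - 1 < length ts1" using ts1(2) by auto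
  have "0 \<in> set us" "T \<in> set us"
    using us(2) ts1(3,4) nth_mem[OF l(1)] nth_mem[OF l(2)] by auto
  then obtain k0 kT where k: "k0 < length us" "us ! k0 = 0" "kT < length us" "us ! kT = T"
    by (auto simp: in_set_conv_nth)
  have len: "0 < length us" using k(1) by linarith
  have "us ! 0 \<in> {0..T}" "us ! (length us - 1) \<in> {0..T}"
    using subsetD[OF range nth_mem] len by auto
  moreover have "us ! 0 \<le> us ! k0" "us ! kT \<le> us ! (length us - 1)"
    using strict_sorted_nth_mono[OF us(1), of 0 k0] strict_sorted_nth_mono[OF us(1), of kT] k by auto
  ultimately have "us ! 0 = 0" "us ! (length us - 1) = T" using k by auto
  moreover have "set ts1 \<subseteq> set us" "set ts2 \<subseteq> set us" using us(2) by auto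
  ultimately show thesis using that us(1) range len by blast
qed

lemma nn_integral_piecewise_constant:
  fixes G :: "real \<Rightarrow> ennreal"
  assumes us: "sorted_wrt (<) us" "0 < length us" "us ! 0 = 0" "us ! (length us - 1) = T"
    and const: "\<And>j t. Suc j < length us \<Longrightarrow> us ! j \<le> t \<Longrightarrow> t < us ! Suc j \<Longrightarrow> G t = G (us ! j)"
  shows "(\<integral>\<^sup>+ t. indicator {0..T} t * G t \<partial>lborel)
       = (\<Sum>j<length us - 1. G (us ! j) * ennreal (us ! Suc j - us ! j))"
proof -
  define m where "m = length us - 1"
  have cells: "indicator {us ! 0..<us ! k} t * G t
      = (\<Sum>j<k. G (us ! j) * indicator {us ! j..<us ! Suc j} t)" if "k \<le> m" for k t
    using that
  proof (induction k)
    case (Suc k)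
    have k: "Suc k < length us" using Suc.prems m_def us(2) by linarith
    have "us ! 0 \<le> us ! k" "us ! k < us ! Suc k"
      using strict_sorted_nth_mono[OF us(1), of 0 k] sorted_wrt_nth_less[OF us(1), of k "Suc k"] k by auto
    then have "indicator {us ! 0..<us ! Suc k} t * G t
        = indicator {us ! 0..<us ! k} t * G t + G (us ! k) * indicator {us ! k..<us ! Suc k} t"
      using const[OF k, of t] by (cases "t < us ! k") (auto simp: indicator_def)
    then show ?case using Suc by simp
  qed simp
  have "AE t in lborel. indicator {0..T} t * G t = indicator {us ! 0..<us ! m} t * G t"
    using AE_lborel_singleton[of T] by eventually_elim (auto simp: us(3) us(4)[folded m_def] indicator_def)
  then have "(\<integral>\<^sup>+ t. indicator {0..T} t * G t \<partial>lborel)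
      = (\<integral>\<^sup>+ t. indicator {us ! 0..<us ! m} t * G t \<partial>lborel)"
    by (rule nn_integral_cong_AE)
  also have "\<dots> = (\<integral>\<^sup>+ t. (\<Sum>j<m. G (us ! j) * indicator {us ! j..<us ! Suc j} t) \<partial>lborel)"
    unfolding cells[OF order_refl] ..
  also have "\<dots> = (\<Sum>j<m. \<integral>\<^sup>+ t. G (us ! j) * indicator {us ! j..<us ! Suc j} t \<partial>lborel)"
    by (rule nn_integral_sum) simp
  also have "\<dots> = (\<Sum>j<m. G (us ! j) * ennreal (us ! Suc j - us ! j))"
  proof (rule sum.cong)
    fix j assume "j \<in> {..<m}"
    then have "us ! j < us ! Suc j" using sorted_wrt_nth_less[OF us(1), of j "Suc j"] m_def by auto
    then show "(\<integral>\<^sup>+ t. G (us ! j) * indicator {us ! j..<us ! Suc j} t \<partial>lborel)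
        = G (us ! j) * ennreal (us ! Suc j - us ! j)"
      by (subst nn_integral_cmult_indicator) auto
  qed simp
  finally show ?thesis unfolding m_def .
qed


section \<open>Exponential moments of Wiener integrals\<close>

lemma normal_density_times_exp:
  assumes "0 < \<sigma>"
  shows "normal_density 0 \<sigma> x * exp (a * x) = exp (a\<^sup>2 * \<sigma>\<^sup>2 / 2) * normal_density (a * \<sigma>\<^sup>2) \<sigma> x"
proof -
  have "- (x - 0)\<^sup>2 / (2 * \<sigma>\<^sup>2) + a * x = - (x - a * \<sigma>\<^sup>2)\<^sup>2 / (2 * \<sigma>\<^sup>2) + a\<^sup>2 * \<sigma>\<^sup>2 / 2"
    using assms by (simp add: field_simps power2_eq_square)
  then have "exp (- (x - 0)\<^sup>2 / (2 * \<sigma>\<^sup>2)) * exp (a * x)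
      = exp (a\<^sup>2 * \<sigma>\<^sup>2 / 2) * exp (- (x - a * \<sigma>\<^sup>2)\<^sup>2 / (2 * \<sigma>\<^sup>2))"
    by (metis exp_add mult.commute)
  then show ?thesis unfolding normal_density_def by (simp add: algebra_simps)
qed

lemma nn_integral_exp_normal:
  assumes X: "distributed P lborel X (normal_density 0 \<sigma>)" and \<sigma>: "0 < \<sigma>"
  shows "(\<integral>\<^sup>+ \<omega>. ennreal (exp (a * X \<omega>)) \<partial>P) = ennreal (exp (a\<^sup>2 * \<sigma>\<^sup>2 / 2))"
proof -
  have "(\<integral>\<^sup>+ \<omega>. ennreal (exp (a * X \<omega>)) \<partial>P)
      = (\<integral>\<^sup>+ x. ennreal (normal_density 0 \<sigma> x) * ennreal (exp (a * x)) \<partial>lborel)"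
    using distributed_nn_integral[OF X, of "\<lambda>x. ennreal (exp (a * x))"] by simp
  also have "\<dots> = (\<integral>\<^sup>+ x. ennreal (exp (a\<^sup>2 * \<sigma>\<^sup>2 / 2)) * ennreal (normal_density (a * \<sigma>\<^sup>2) \<sigma> x) \<partial>lborel)"
    by (intro nn_integral_cong) (simp add: ennreal_mult'[symmetric] normal_density_times_exp[OF \<sigma>])
  also have "\<dots> = ennreal (exp (a\<^sup>2 * \<sigma>\<^sup>2 / 2))"
    using \<sigma> by (simp add: nn_integral_cmult nn_integral_eq_integral integral_normal_density)
  finally show ?thesis .
qed

lemma wiener_processD:
  assumes "wiener_process P W"
  shows "prob_space P" "W t \<in> borel_measurable P"
    and "0 \<le> s \<Longrightarrow> s < t \<Longrightarrow>
      distributed P lborel (\<lambda>\<omega>. W t \<omega> - W s \<omega>) (normal_density 0 (sqrt (t - s)))"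
    and "sorted ts \<Longrightarrow> \<forall>t\<in>set ts. 0 \<le> t \<Longrightarrow>
      prob_space.indep_vars P (\<lambda>_. borel) (\<lambda>i \<omega>. W (ts ! Suc i) \<omega> - W (ts ! i) \<omega>) {..<length ts - 1}"
  using assms unfolding wiener_process_def by simp_all

lemma nn_integral_exp_wiener_increments:
  assumes W: "wiener_process P W" and us: "sorted_wrt (<) us" "set us \<subseteq> {0..}"
  shows "(\<integral>\<^sup>+ \<omega>. ennreal (exp (\<Sum>j<length us - 1. a j * (W (us ! Suc j) \<omega> - W (us ! j) \<omega>))) \<partial>P)
       = ennreal (exp (\<Sum>j<length us - 1. (a j)\<^sup>2 * (us ! Suc j - us ! j) / 2))"
proof -
  interpret prob_space P using wiener_processD(1)[OF W] .
  define m where "m = length us - 1"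
  have "sorted us" "\<forall>t\<in>set us. 0 \<le> t" using us strict_sorted_imp_sorted by auto
  then have "indep_vars (\<lambda>_. borel) (\<lambda>j \<omega>. W (us ! Suc j) \<omega> - W (us ! j) \<omega>) {..<m}"
    unfolding m_def by (rule wiener_processD(4)[OF W])
  then have indep: "indep_vars (\<lambda>_. borel)
      (\<lambda>j \<omega>. ennreal (exp (a j * (W (us ! Suc j) \<omega> - W (us ! j) \<omega>)))) {..<m}"
    by (rule indep_vars_compose2) simp
  have increment: "(\<integral>\<^sup>+ \<omega>. ennreal (exp (a j * (W (us ! Suc j) \<omega> - W (us ! j) \<omega>))) \<partial>P)
      = ennreal (exp ((a j)\<^sup>2 * (us ! Suc j - us ! j) / 2))" if "j < m" for j
  proof -
    have j: "Suc j < length us" using that m_def by simp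
    have "0 \<le> us ! j" using subsetD[OF us(2) nth_mem[OF Suc_lessD[OF j]]] by simp
    moreover have lt: "us ! j < us ! Suc j" using sorted_wrt_nth_less[OF us(1)] j by simp
    ultimately have "distributed P lborel (\<lambda>\<omega>. W (us ! Suc j) \<omega> - W (us ! j) \<omega>)
        (normal_density 0 (sqrt (us ! Suc j - us ! j)))"
      by (rule wiener_processD(3)[OF W])
    from nn_integral_exp_normal[OF this] show ?thesis using lt by simp
  qed
  have "(\<integral>\<^sup>+ \<omega>. ennreal (exp (\<Sum>j<m. a j * (W (us ! Suc j) \<omega> - W (us ! j) \<omega>))) \<partial>P)
      = (\<integral>\<^sup>+ \<omega>. (\<Prod>j<m. ennreal (exp (a j * (W (us ! Suc j) \<omega> - W (us ! j) \<omega>)))) \<partial>P)"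
    by (simp add: exp_sum prod_ennreal)
  also have "\<dots> = (\<Prod>j<m. \<integral>\<^sup>+ \<omega>. ennreal (exp (a j * (W (us ! Suc j) \<omega> - W (us ! j) \<omega>))) \<partial>P)"
    by (rule indep_vars_nn_integral[OF _ indep]) auto
  also have "\<dots> = ennreal (exp (\<Sum>j<m. (a j)\<^sup>2 * (us ! Suc j - us ! j) / 2))"
    by (simp add: increment exp_sum prod_ennreal)
  finally show ?thesis unfolding m_def .
qed

lemma nn_integral_step_fun_diff_sq:
  assumes r1: "partition_refinement T ts1 cs1 us" and r2: "partition_refinement T ts2 cs2 us"
    and us: "0 < length us" "us ! 0 = 0" "us ! (length us - 1) = T"
  shows "(\<integral>\<^sup>+ t. indicator {0..T} t * ennreal ((step_fun ts1 cs1 t - step_fun ts2 cs2 t)\<^sup>2) \<partial>lborel)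
    = ennreal (\<Sum>j<length us - 1.
        (step_fun ts1 cs1 (us ! j) - step_fun ts2 cs2 (us ! j))\<^sup>2 * (us ! Suc j - us ! j))"
proof -
  have sorted: "sorted_wrt (<) us" using r1 by (simp add: partition_refinement_def)
  have "(\<integral>\<^sup>+ t. indicator {0..T} t * ennreal ((step_fun ts1 cs1 t - step_fun ts2 cs2 t)\<^sup>2) \<partial>lborel)
      = (\<Sum>j<length us - 1. ennreal ((step_fun ts1 cs1 (us ! j) - step_fun ts2 cs2 (us ! j))\<^sup>2)
          * ennreal (us ! Suc j - us ! j))"
  proof (rule nn_integral_piecewise_constant[OF sorted us])
    fix j t assume jt: "Suc j < length us" "us ! j \<le> t" "t < us ! Suc j"
    show "ennreal ((step_fun ts1 cs1 t - step_fun ts2 cs2 t)\<^sup>2)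
        = ennreal ((step_fun ts1 cs1 (us ! j) - step_fun ts2 cs2 (us ! j))\<^sup>2)"
      unfolding partition_refinement.step_fun_const_on_cell[OF r1 jt]
        partition_refinement.step_fun_const_on_cell[OF r2 jt] ..
  qed
  also have "\<dots> = ennreal (\<Sum>j<length us - 1.
      (step_fun ts1 cs1 (us ! j) - step_fun ts2 cs2 (us ! j))\<^sup>2 * (us ! Suc j - us ! j))"
    using sorted_wrt_nth_less[OF sorted, of _ "Suc _"]
    by (subst sum_ennreal[symmetric]) (auto simp: ennreal_mult' less_imp_le intro!: sum.cong)
  finally show ?thesis .
qed

lemma step_wiener_diff_eq_sum:
  assumes "partition_refinement T ts1 cs1 us" "partition_refinement T ts2 cs2 us"
  shows "step_wiener W ts1 cs1 \<omega> - step_wiener W ts2 cs2 \<omega>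
    = (\<Sum>j<length us - 1. (step_fun ts1 cs1 (us ! j) - step_fun ts2 cs2 (us ! j))
        * (W (us ! Suc j) \<omega> - W (us ! j) \<omega>))"
  unfolding step_wiener_def partition_refinement.sum_increments_refine[OF assms(1), of "\<lambda>t. W t \<omega>"]
    partition_refinement.sum_increments_refine[OF assms(2), of "\<lambda>t. W t \<omega>"]
  by (simp add: sum_subtractf[symmetric] left_diff_distrib)

lemma step_wiener_diff_exp_moment:
  assumes W: "wiener_process P W"
    and adm1: "admissible_partition T ts1 cs1" and adm2: "admissible_partition T ts2 cs2"
  obtains V where "0 \<le> V"
    "(\<integral>\<^sup>+ t. indicator {0..T} t * ennreal ((step_fun ts1 cs1 t - step_fun ts2 cs2 t)\<^sup>2) \<partial>lborel)
       = ennreal V"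
    "(\<integral>\<^sup>+ \<omega>. ennreal (exp (a * (step_wiener W ts1 cs1 \<omega> - step_wiener W ts2 cs2 \<omega>))) \<partial>P)
       = ennreal (exp (a\<^sup>2 / 2 * V))"
proof -
  obtain us where us: "sorted_wrt (<) us" "set ts1 \<subseteq> set us" "set ts2 \<subseteq> set us"
      "set us \<subseteq> {0..T}" "0 < length us" "us ! 0 = 0" "us ! (length us - 1) = T"
    using admissible_partition_common_refinement[OF adm1 adm2] .
  have r1: "partition_refinement T ts1 cs1 us" and r2: "partition_refinement T ts2 cs2 us"
    using adm1 adm2 us by (simp_all add: partition_refinement_def)
  define F where "F j = step_fun ts1 cs1 (us ! j) - step_fun ts2 cs2 (us ! j)" for j
  define V where "V = (\<Sum>j<length us - 1. (F j)\<^sup>2 * (us ! Suc j - us ! j))"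
  have "0 \<le> V"
    unfolding V_def using sorted_wrt_nth_less[OF us(1), of _ "Suc _"]
    by (intro sum_nonneg mult_nonneg_nonneg) (auto simp: less_imp_le)
  moreover have "(\<integral>\<^sup>+ \<omega>. ennreal (exp (a * (step_wiener W ts1 cs1 \<omega> - step_wiener W ts2 cs2 \<omega>))) \<partial>P)
      = ennreal (exp (a\<^sup>2 / 2 * V))"
  proof -
    have "a * (step_wiener W ts1 cs1 \<omega> - step_wiener W ts2 cs2 \<omega>)
        = (\<Sum>j<length us - 1. (a * F j) * (W (us ! Suc j) \<omega> - W (us ! j) \<omega>))" for \<omega>
      unfolding step_wiener_diff_eq_sum[OF r1 r2] F_def by (simp add: sum_distrib_left mult.assoc)
    moreover have "(\<Sum>j<length us - 1. (a * F j)\<^sup>2 * (us ! Suc j - us ! j) / 2) = a\<^sup>2 / 2 * V"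
      unfolding V_def sum_distrib_left by (intro sum.cong refl) (simp add: power_mult_distrib)
    moreover have "set us \<subseteq> {0..}" using us(4) by auto
    ultimately show ?thesis
      using nn_integral_exp_wiener_increments[OF W us(1), of "\<lambda>j. a * F j"] by presburger
  qed
  ultimately show thesis
    using that nn_integral_step_fun_diff_sq[OF r1 r2 us(5-7)] unfolding V_def F_def by blast
qed

lemma nn_integral_sq_diff_le:
  assumes "f \<in> borel_measurable M" "g \<in> borel_measurable M"
  shows "(\<integral>\<^sup>+ x. ennreal ((f x - g x)\<^sup>2) \<partial>M)
    \<le> 2 * (\<integral>\<^sup>+ x. ennreal ((f x)\<^sup>2) \<partial>M) + 2 * (\<integral>\<^sup>+ x. ennreal ((g x)\<^sup>2) \<partial>M)"
proof -
  have "(\<integral>\<^sup>+ x. ennreal ((f x - g x)\<^sup>2) \<partial>M)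
      \<le> (\<integral>\<^sup>+ x. 2 * ennreal ((f x)\<^sup>2) + 2 * ennreal ((g x)\<^sup>2) \<partial>M)"
  proof (intro nn_integral_mono)
    fix x
    have "(f x - g x)\<^sup>2 \<le> 2 * (f x)\<^sup>2 + 2 * (g x)\<^sup>2"
      using zero_le_power2[of "f x + g x"] by (simp add: power2_eq_square algebra_simps)
    then have "ennreal ((f x - g x)\<^sup>2) \<le> ennreal (2 * (f x)\<^sup>2 + 2 * (g x)\<^sup>2)"
      by (rule ennreal_leI)
    then show "ennreal ((f x - g x)\<^sup>2) \<le> 2 * ennreal ((f x)\<^sup>2) + 2 * ennreal ((g x)\<^sup>2)"
      by (simp add: ennreal_plus ennreal_mult)
  qed
  also have "\<dots> = 2 * (\<integral>\<^sup>+ x. ennreal ((f x)\<^sup>2) \<partial>M) + 2 * (\<integral>\<^sup>+ x. ennreal ((g x)\<^sup>2) \<partial>M)"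
    using assms by (simp add: nn_integral_add nn_integral_cmult)
  finally show ?thesis .
qed

lemma L2_tendsto_diff:
  assumes [measurable]: "\<And>n. f n \<in> borel_measurable M" "\<And>n. g n \<in> borel_measurable M"
    "f' \<in> borel_measurable M" "g' \<in> borel_measurable M"
    and f: "(\<lambda>n. \<integral>\<^sup>+ x. ennreal ((f n x - f' x)\<^sup>2) \<partial>M) \<longlonglongrightarrow> 0"
    and g: "(\<lambda>n. \<integral>\<^sup>+ x. ennreal ((g n x - g' x)\<^sup>2) \<partial>M) \<longlonglongrightarrow> 0"
  shows "(\<lambda>n. \<integral>\<^sup>+ x. ennreal ((f n x - g n x - (f' x - g' x))\<^sup>2) \<partial>M) \<longlonglongrightarrow> 0"
proof (rule tendsto_sandwich[OF _ _ tendsto_const])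
  have "(\<lambda>n. 2 * (\<integral>\<^sup>+ x. ennreal ((f n x - f' x)\<^sup>2) \<partial>M) + 2 * (\<integral>\<^sup>+ x. ennreal ((g n x - g' x)\<^sup>2) \<partial>M))
      \<longlonglongrightarrow> 2 * 0 + 2 * 0"
    by (intro tendsto_add ennreal_tendsto_cmult f g) auto
  then show "(\<lambda>n. 2 * (\<integral>\<^sup>+ x. ennreal ((f n x - f' x)\<^sup>2) \<partial>M) + 2 * (\<integral>\<^sup>+ x. ennreal ((g n x - g' x)\<^sup>2) \<partial>M))
      \<longlonglongrightarrow> 0" by simp
  show "\<forall>\<^sub>F n in sequentially. (\<integral>\<^sup>+ x. ennreal ((f n x - g n x - (f' x - g' x))\<^sup>2) \<partial>M)
      \<le> 2 * (\<integral>\<^sup>+ x. ennreal ((f n x - f' x)\<^sup>2) \<partial>M) + 2 * (\<integral>\<^sup>+ x. ennreal ((g n x - g' x)\<^sup>2) \<partial>M)"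
  proof (intro always_eventually allI)
    fix n
    have "f n x - g n x - (f' x - g' x) = (f n x - f' x) - (g n x - g' x)" for x
      by simp
    then show "(\<integral>\<^sup>+ x. ennreal ((f n x - g n x - (f' x - g' x))\<^sup>2) \<partial>M)
      \<le> 2 * (\<integral>\<^sup>+ x. ennreal ((f n x - f' x)\<^sup>2) \<partial>M) + 2 * (\<integral>\<^sup>+ x. ennreal ((g n x - g' x)\<^sup>2) \<partial>M)"
      by (simp only:) (rule nn_integral_sq_diff_le; measurable)
  qed
qed simp

lemma L2_tendsto_imp_AE_subseq:
  assumes [measurable]: "\<And>n. S n \<in> borel_measurable M" "X \<in> borel_measurable M"
    and L2: "(\<lambda>n. \<integral>\<^sup>+ x. ennreal ((S n x - X x)\<^sup>2) \<partial>M) \<longlonglongrightarrow> 0"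
  obtains r where "filterlim r sequentially sequentially" "AE x in M. (\<lambda>k. S (r k) x) \<longlonglongrightarrow> X x"
proof -
  have "\<forall>k. \<exists>n. k \<le> n \<and> (\<integral>\<^sup>+ x. ennreal ((S n x - X x)\<^sup>2) \<partial>M) \<le> ennreal ((1/2) ^ k)"
  proof
    fix k :: nat
    have "(0::ennreal) < ennreal ((1/2) ^ k)" by simp
    from order_tendstoD(2)[OF L2 this] obtain N
      where "\<And>n. n \<ge> N \<Longrightarrow> (\<integral>\<^sup>+ x. ennreal ((S n x - X x)\<^sup>2) \<partial>M) < ennreal ((1/2) ^ k)"
      unfolding eventually_sequentially by blast
    from this[of "max k N"] show "\<exists>n. k \<le> n \<and> (\<integral>\<^sup>+ x. ennreal ((S n x - X x)\<^sup>2) \<partial>M) \<le> ennreal ((1/2) ^ k)"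
      by (intro exI[of _ "max k N"]) simp
  qed
  then obtain r where r: "\<And>k. k \<le> r k"
    "\<And>k. (\<integral>\<^sup>+ x. ennreal ((S (r k) x - X x)\<^sup>2) \<partial>M) \<le> ennreal ((1/2) ^ k)"
    by metis
  have "(\<integral>\<^sup>+ x. (\<Sum>k. ennreal ((S (r k) x - X x)\<^sup>2)) \<partial>M) = (\<Sum>k. \<integral>\<^sup>+ x. ennreal ((S (r k) x - X x)\<^sup>2) \<partial>M)"
    by (rule nn_integral_suminf) simp
  also have "\<dots> \<le> (\<Sum>k. ennreal ((1/2) ^ k))"
    by (intro suminf_le r(2)) auto
  also have "\<dots> = ennreal (\<Sum>k. (1/2::real) ^ k)"
    by (rule suminf_ennreal2) (auto intro: summable_geometric)
  also have "\<dots> < \<infinity>" by simp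
  finally have "AE x in M. (\<Sum>k. ennreal ((S (r k) x - X x)\<^sup>2)) \<noteq> \<infinity>"
    by (intro nn_integral_PInf_AE) simp_all
  then have "AE x in M. (\<lambda>k. S (r k) x) \<longlonglongrightarrow> X x"
  proof eventually_elim
    case (elim x)
    then have "(\<lambda>k. (S (r k) x - X x)\<^sup>2) \<longlonglongrightarrow> 0"
      by (intro summable_LIMSEQ_zero summable_suminf_not_top) auto
    then have "(\<lambda>k. sqrt ((S (r k) x - X x)\<^sup>2)) \<longlonglongrightarrow> sqrt 0" by (rule tendsto_real_sqrt)
    then have "(\<lambda>k. S (r k) x - X x) \<longlonglongrightarrow> 0" by (simp add: tendsto_rabs_zero_iff)
    then show ?case by (simp add: LIM_zero_iff)
  qed
  moreover have "filterlim r sequentially sequentially"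
    by (rule filterlim_at_top_mono[OF filterlim_ident]) (simp add: r(1))
  ultimately show thesis using that by blast
qed

text \<open>Fatou's lemma along an almost everywhere convergent subsequence.\<close>
lemma nn_integral_le_of_L2_tendsto:
  fixes f :: "real \<Rightarrow> real"
  assumes [measurable]: "\<And>n. S n \<in> borel_measurable M" "X \<in> borel_measurable M"
    and f: "continuous_on UNIV f"
    and L2: "(\<lambda>n. \<integral>\<^sup>+ x. ennreal ((S n x - X x)\<^sup>2) \<partial>M) \<longlonglongrightarrow> 0"
    and bound: "\<forall>\<^sub>F n in sequentially. (\<integral>\<^sup>+ x. ennreal (f (S n x)) \<partial>M) \<le> B"
  shows "(\<integral>\<^sup>+ x. ennreal (f (X x)) \<partial>M) \<le> B"
proof -
  obtain r where r: "filterlim r sequentially sequentially"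
    and AE: "AE x in M. (\<lambda>k. S (r k) x) \<longlonglongrightarrow> X x"
    using L2_tendsto_imp_AE_subseq[of S M X] L2 by auto
  have [measurable]: "f \<in> borel_measurable borel" using f by (rule borel_measurable_continuous_onI)
  have "(\<integral>\<^sup>+ x. ennreal (f (X x)) \<partial>M) = (\<integral>\<^sup>+ x. liminf (\<lambda>k. ennreal (f (S (r k) x))) \<partial>M)"
  proof (rule nn_integral_cong_AE)
    show "AE x in M. ennreal (f (X x)) = liminf (\<lambda>k. ennreal (f (S (r k) x)))"
      using AE
    proof eventually_elim
      case (elim x)
      then have "(\<lambda>k. ennreal (f (S (r k) x))) \<longlonglongrightarrow> ennreal (f (X x))"
        by (intro tendsto_ennrealI continuous_on_tendsto_compose[OF f]) auto
      then show ?case by (intro lim_imp_Liminf[symmetric]) auto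
    qed
  qed
  also have "\<dots> \<le> liminf (\<lambda>k. \<integral>\<^sup>+ x. ennreal (f (S (r k) x)) \<partial>M)"
    by (rule nn_integral_liminf) simp
  also have "\<dots> \<le> B"
    using filterlim_iff[THEN iffD1, OF r, rule_format, OF bound] by (intro Liminf_le) auto
  finally show ?thesis .
qed

lemma le_ennreal_exp_of_forall_gt:
  assumes "\<And>\<delta>. 0 < \<delta> \<Longrightarrow> x \<le> ennreal (exp (c * (V + \<delta>)))"
  shows "x \<le> ennreal (exp (c * V))"
proof (rule tendsto_le[OF trivial_limit_at_right_real _ tendsto_const])
  have "((\<lambda>\<delta>. ennreal (exp (c * (V + \<delta>)))) \<longlongrightarrow> ennreal (exp (c * (V + 0)))) (at_right 0)"
    by (intro tendsto_ennrealI tendsto_intros)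
  then show "((\<lambda>\<delta>. ennreal (exp (c * (V + \<delta>)))) \<longlongrightarrow> ennreal (exp (c * V))) (at_right 0)"
    by simp
  show "\<forall>\<^sub>F \<delta> in at_right 0. x \<le> ennreal (exp (c * (V + \<delta>)))"
    using eventually_at_right_less[of "0::real"] by eventually_elim (rule assms)
qed

lemma set_borel_measurable_iff_restrict_space:
  fixes f :: "real \<Rightarrow> real"
  assumes "A \<in> sets lborel"
  shows "set_borel_measurable lborel A f \<longleftrightarrow> f \<in> borel_measurable (restrict_space lborel A)"
  unfolding set_borel_measurable_def using borel_measurable_restrict_space_iff[of A lborel f] assms by simp

lemma borel_measurable_step_fun: "step_fun ts cs \<in> borel_measurable lborel"
  unfolding step_fun_def by measurable

lemma nn_integral_indicator_restrict_space:
  "A \<in> sets M \<Longrightarrow> (\<integral>\<^sup>+ x. indicator A x * f x \<partial>M) = (\<integral>\<^sup>+ x. f x \<partial>restrict_space M A)"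
  by (simp add: nn_integral_restrict_space mult.commute)

lemma step_wiener_diff_exp_moment_le:
  assumes W: "wiener_process P W"
    and adm1: "admissible_partition T ts1 cs1" and adm2: "admissible_partition T ts2 cs2"
    and f1: "set_borel_measurable lborel {0..T} f1" and f2: "set_borel_measurable lborel {0..T} f2"
    and V: "(\<integral>\<^sup>+ t. indicator {0..T} t * ennreal ((f1 t - f2 t)\<^sup>2) \<partial>lborel) \<le> ennreal V" "0 \<le> V"
    and close: "(\<integral>\<^sup>+ t. indicator {0..T} t *
        ennreal ((step_fun ts1 cs1 t - step_fun ts2 cs2 t - (f1 t - f2 t))\<^sup>2) \<partial>lborel) \<le> ennreal \<delta>"
      "0 \<le> \<delta>"
  shows "(\<integral>\<^sup>+ \<omega>. ennreal (exp (a * (step_wiener W ts1 cs1 \<omega> - step_wiener W ts2 cs2 \<omega>))) \<partial>P)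
    \<le> ennreal (exp (a\<^sup>2 * (V + \<delta>)))"
proof -
  define R where "R = restrict_space lborel {0..T::real}"
  define s where "s t = step_fun ts1 cs1 t - step_fun ts2 cs2 t" for t
  note on_R = nn_integral_indicator_restrict_space[of "{0..T}" lborel, folded R_def, simplified]
  have [measurable]: "f1 \<in> borel_measurable R" "f2 \<in> borel_measurable R"
    "step_fun ts cs \<in> borel_measurable R" for ts cs
    using f1 f2 borel_measurable_step_fun unfolding R_def
    by (simp_all add: set_borel_measurable_iff_restrict_space measurable_restrict_space1)
  have [measurable]: "s \<in> borel_measurable R" unfolding s_def by measurable
  obtain Vn where "0 \<le> Vn" and Vn: "(\<integral>\<^sup>+ t. ennreal ((s t)\<^sup>2) \<partial>R) = ennreal Vn"
    and moment: "(\<integral>\<^sup>+ \<omega>. ennreal (exp (a * (step_wiener W ts1 cs1 \<omega> - step_wiener W ts2 cs2 \<omega>))) \<partial>P)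
      = ennreal (exp (a\<^sup>2 / 2 * Vn))"
    using step_wiener_diff_exp_moment[OF W adm1 adm2, where a=a] unfolding s_def on_R by blast
  have "(s t)\<^sup>2 = (f1 t - f2 t - (f1 t - f2 t - s t))\<^sup>2" for t by simp
  then have "ennreal Vn \<le> 2 * (\<integral>\<^sup>+ t. ennreal ((f1 t - f2 t)\<^sup>2) \<partial>R)
      + 2 * (\<integral>\<^sup>+ t. ennreal ((s t - (f1 t - f2 t))\<^sup>2) \<partial>R)"
    using nn_integral_sq_diff_le[of "\<lambda>t. f1 t - f2 t" R "\<lambda>t. f1 t - f2 t - s t"]
    unfolding Vn[symmetric] by (simp add: power2_commute)
  also have "\<dots> \<le> 2 * ennreal V + 2 * ennreal \<delta>"
    using V close unfolding on_R s_def by (intro add_mono mult_left_mono) auto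
  also have "\<dots> = ennreal (2 * (V + \<delta>))"
    using V close by (simp add: ennreal_plus ennreal_mult)
  finally have "Vn \<le> 2 * (V + \<delta>)"
    using V close by (subst (asm) ennreal_le_iff) auto
  then have "a\<^sup>2 / 2 * Vn \<le> a\<^sup>2 / 2 * (2 * (V + \<delta>))" by (rule mult_left_mono) simp
  then show ?thesis unfolding moment by (intro ennreal_leI) (simp add: algebra_simps)
qed

text \<open>The factor 2 lost against the exact Gaussian moment \<open>exp (a\<^sup>2 V / 2)\<close> comes from
  \<open>(x + y)\<^sup>2 \<le> 2x\<^sup>2 + 2y\<^sup>2\<close> in the step function approximation.\<close>
lemma wiener_integral_diff_exp_moment_le:
  assumes W: "wiener_process P W"
    and I1: "wiener_integral P W T f1 I1" and I2: "wiener_integral P W T f2 I2"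
    and f1: "set_borel_measurable lborel {0..T} f1" and f2: "set_borel_measurable lborel {0..T} f2"
    and V: "(\<integral>\<^sup>+ t. indicator {0..T} t * ennreal ((f1 t - f2 t)\<^sup>2) \<partial>lborel) \<le> ennreal V" "0 \<le> V"
  shows "(\<integral>\<^sup>+ \<omega>. ennreal (exp (a * (I1 \<omega> - I2 \<omega>))) \<partial>P) \<le> ennreal (exp (a\<^sup>2 * V))"
proof (rule le_ennreal_exp_of_forall_gt)
  fix \<delta> :: real assume "0 < \<delta>"
  have [measurable]: "W t \<in> borel_measurable P" for t using wiener_processD(2)[OF W] .
  obtain tss1 css1 where adm1: "\<And>n. admissible_partition T (tss1 n) (css1 n)"
    and f1L: "(\<lambda>n. \<integral>\<^sup>+ t. indicator {0..T} t * ennreal ((step_fun (tss1 n) (css1 n) t - f1 t)\<^sup>2) \<partial>lborel)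
      \<longlonglongrightarrow> 0"
    and I1L: "(\<lambda>n. \<integral>\<^sup>+ \<omega>. ennreal ((step_wiener W (tss1 n) (css1 n) \<omega> - I1 \<omega>)\<^sup>2) \<partial>P) \<longlonglongrightarrow> 0"
    and I1_meas: "I1 \<in> borel_measurable P"
    using I1 unfolding wiener_integral_def by blast
  obtain tss2 css2 where adm2: "\<And>n. admissible_partition T (tss2 n) (css2 n)"
    and f2L: "(\<lambda>n. \<integral>\<^sup>+ t. indicator {0..T} t * ennreal ((step_fun (tss2 n) (css2 n) t - f2 t)\<^sup>2) \<partial>lborel)
      \<longlonglongrightarrow> 0"
    and I2L: "(\<lambda>n. \<integral>\<^sup>+ \<omega>. ennreal ((step_wiener W (tss2 n) (css2 n) \<omega> - I2 \<omega>)\<^sup>2) \<partial>P) \<longlonglongrightarrow> 0"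
    and I2_meas: "I2 \<in> borel_measurable P"
    using I2 unfolding wiener_integral_def by blast
  note [measurable] = I1_meas I2_meas
  have [measurable]: "step_wiener W ts cs \<in> borel_measurable P" for ts cs
    unfolding step_wiener_def by measurable
  define R where "R = restrict_space lborel {0..T::real}"
  note on_R = nn_integral_indicator_restrict_space[of "{0..T}" lborel, folded R_def, simplified]
  have [measurable]: "f1 \<in> borel_measurable R" "f2 \<in> borel_measurable R"
    "step_fun ts cs \<in> borel_measurable R" for ts cs
    using f1 f2 borel_measurable_step_fun unfolding R_def
    by (simp_all add: set_borel_measurable_iff_restrict_space measurable_restrict_space1)
  define S where "S n \<omega> = step_wiener W (tss1 n) (css1 n) \<omega> - step_wiener W (tss2 n) (css2 n) \<omega>" for n \<omega>
  have "(\<lambda>n. \<integral>\<^sup>+ t. ennreal ((step_fun (tss1 n) (css1 n) t - step_fun (tss2 n) (css2 n) t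
      - (f1 t - f2 t))\<^sup>2) \<partial>R) \<longlonglongrightarrow> 0"
    using f1L f2L unfolding on_R by (intro L2_tendsto_diff) measurable
  from order_tendstoD(2)[OF this, of "ennreal \<delta>"]
  have "\<forall>\<^sub>F n in sequentially. (\<integral>\<^sup>+ \<omega>. ennreal (exp (a * S n \<omega>)) \<partial>P) \<le> ennreal (exp (a\<^sup>2 * (V + \<delta>)))"
    unfolding S_def on_R[symmetric] using \<open>0 < \<delta>\<close>
    by (auto elim!: eventually_mono intro!: step_wiener_diff_exp_moment_le[OF W adm1 adm2 f1 f2 V])
  moreover have "(\<lambda>n. \<integral>\<^sup>+ \<omega>. ennreal ((S n \<omega> - (I1 \<omega> - I2 \<omega>))\<^sup>2) \<partial>P) \<longlonglongrightarrow> 0"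
    unfolding S_def using I1L I2L by (intro L2_tendsto_diff) measurable
  ultimately show "(\<integral>\<^sup>+ \<omega>. ennreal (exp (a * (I1 \<omega> - I2 \<omega>))) \<partial>P) \<le> ennreal (exp (a\<^sup>2 * (V + \<delta>)))"
    by (intro nn_integral_le_of_L2_tendsto) (auto simp: S_def intro: continuous_intros)
qed

section \<open>The contrast function\<close>

lemma set_integrable_bounded:
  fixes f :: "real \<Rightarrow> real"
  assumes "set_borel_measurable lborel {a..b} f" "\<And>t. t \<in> {a..b} \<Longrightarrow> \<bar>f t\<bar> \<le> B"
  shows "set_integrable lborel {a..b} f"
proof (rule set_integrable_bound[OF _ assms(1)])
  have "integrable lborel (\<lambda>t. B * indicator {a..b} t)"
    by (rule borel_integrable_atLeastAtMost) simp
  then show "set_integrable lborel {a..b} (\<lambda>_. B)"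
    unfolding set_integrable_def by (simp add: mult.commute)
  show "AE t in lborel. t \<in> {a..b} \<longrightarrow> norm (f t) \<le> norm B"
    using assms(2) by (intro AE_I2) force
qed

lemma set_integrable_bounded_mult:
  fixes f S :: "real \<Rightarrow> real"
  assumes f: "set_borel_measurable lborel {a..b} f" "\<And>t. t \<in> {a..b} \<Longrightarrow> \<bar>f t\<bar> \<le> B"
    and S: "set_borel_measurable lborel {a..b} S" "set_integrable lborel {a..b} (\<lambda>t. (S t)\<^sup>2)"
  shows "set_integrable lborel {a..b} (\<lambda>t. f t * S t)"
proof (rule set_integrable_bound)
  show "set_integrable lborel {a..b} (\<lambda>t. B\<^sup>2 + (S t)\<^sup>2)"
    using set_integrable_bounded[of a b "\<lambda>_. B\<^sup>2"] S(2)
    by (intro set_integral_add(1)) (auto simp: set_borel_measurable_def)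
  show "set_borel_measurable lborel {a..b} (\<lambda>t. f t * S t)"
    using f(1) S(1) by (simp add: set_borel_measurable_iff_restrict_space)
  have "\<bar>f t * S t\<bar> \<le> B\<^sup>2 + (S t)\<^sup>2" if "t \<in> {a..b}" for t
  proof -
    have "(f t)\<^sup>2 \<le> B\<^sup>2" using f(2)[OF that] by (metis abs_ge_zero power2_abs power_mono)
    moreover have "2 * \<bar>f t * S t\<bar> \<le> (f t)\<^sup>2 + (S t)\<^sup>2"
      using zero_le_power2[of "\<bar>f t\<bar> - \<bar>S t\<bar>"] by (simp add: power2_diff abs_mult)
    ultimately show ?thesis by simp
  qed
  then show "AE t in lborel. t \<in> {a..b} \<longrightarrow> norm (f t * S t) \<le> norm (B\<^sup>2 + (S t)\<^sup>2)"
    by (intro AE_I2) force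
qed

lemma set_integral_const_indicator:
  assumes "a \<le> p" "p \<le> q" "q \<le> b"
  shows "set_integrable lborel {a..b} (\<lambda>t. c * indicator {p..<q} t :: real)"
    and "(LINT t:{a..b}|lborel. c * indicator {p..<q} t :: real) = c * (q - p)"
proof -
  have eq: "(\<lambda>t. indicator {a..b} t *\<^sub>R (c * indicator {p..<q} t)) = (\<lambda>t. c * indicator {p..<q} t :: real)"
    using assms by (auto simp: indicator_def)
  have "integrable lborel (\<lambda>t. indicator {p..<q} t :: real)"
    using assms by (intro integrable_real_indicator) auto
  then show "set_integrable lborel {a..b} (\<lambda>t. c * indicator {p..<q} t :: real)"
    unfolding set_integrable_def eq by simp
  show "(LINT t:{a..b}|lborel. c * indicator {p..<q} t :: real) = c * (q - p)"
    unfolding set_lebesgue_integral_def eq using assms by simp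
qed

lemma set_borel_measurable_cp_model:
  assumes "set_borel_measurable lborel A h" "set_borel_measurable lborel A g"
  shows "set_borel_measurable lborel A (cp_model h g \<theta>)"
proof -
  have "(\<lambda>t. if t < \<theta> then indicator A t *\<^sub>R h t else indicator A t *\<^sub>R g t) \<in> borel_measurable lborel"
    using assms unfolding set_borel_measurable_def by measurable
  then show ?thesis
    unfolding set_borel_measurable_def cp_model_def by (simp add: if_distrib)
qed

lemma bounded_imp_common_abs_bound:
  fixes f g :: "'a \<Rightarrow> real"
  assumes "bounded (f ` A)" "bounded (g ` A)"
  obtains B where "1 \<le> B" "\<And>t. t \<in> A \<Longrightarrow> \<bar>f t\<bar> \<le> B" "\<And>t. t \<in> A \<Longrightarrow> \<bar>g t\<bar> \<le> B"
proof -
  obtain Bf Bg where "\<And>t. t \<in> A \<Longrightarrow> \<bar>f t\<bar> \<le> Bf" "\<And>t. t \<in> A \<Longrightarrow> \<bar>g t\<bar> \<le> Bg"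
    using assms unfolding bounded_real by (metis image_eqI)
  then show thesis by (intro that[of "max (max Bf Bg) 1"]) fastforce+
qed

locale change_point_contrast =
  fixes T :: real and h g S0 :: "real \<Rightarrow> real" and B :: real
  assumes h_meas: "set_borel_measurable lborel {0..T} h"
    and g_meas: "set_borel_measurable lborel {0..T} g"
    and S0_meas: "set_borel_measurable lborel {0..T} S0"
    and S0_sq_integrable: "set_integrable lborel {0..T} (\<lambda>t. (S0 t)\<^sup>2)"
    and h_bound: "\<And>t. t \<in> {0..T} \<Longrightarrow> \<bar>h t\<bar> \<le> B"
    and g_bound: "\<And>t. t \<in> {0..T} \<Longrightarrow> \<bar>g t\<bar> \<le> B"
begin

lemma cp_model_meas: "set_borel_measurable lborel {0..T} (cp_model h g \<theta>)"
  by (rule set_borel_measurable_cp_model[OF h_meas g_meas])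

lemma cp_model_bound: "t \<in> {0..T} \<Longrightarrow> \<bar>cp_model h g \<theta> t\<bar> \<le> B"
  using h_bound g_bound by (simp add: cp_model_def)

lemma set_integrable_cp_model_sq: "set_integrable lborel {0..T} (\<lambda>t. (cp_model h g \<theta> t)\<^sup>2)"
proof (rule set_integrable_bounded)
  show "set_borel_measurable lborel {0..T} (\<lambda>t. (cp_model h g \<theta> t)\<^sup>2)"
    using cp_model_meas by (simp add: set_borel_measurable_iff_restrict_space)
  show "\<bar>(cp_model h g \<theta> t)\<^sup>2\<bar> \<le> B\<^sup>2" if "t \<in> {0..T}" for t
  proof -
    have "(cp_model h g \<theta> t)\<^sup>2 \<le> B\<^sup>2"
      using cp_model_bound[OF that] by (metis abs_ge_zero power2_abs power_mono)
    then show ?thesis by simp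
  qed
qed

lemma set_integrable_cp_model_S0: "set_integrable lborel {0..T} (\<lambda>t. cp_model h g \<theta> t * S0 t)"
  using cp_model_meas cp_model_bound S0_meas S0_sq_integrable by (rule set_integrable_bounded_mult)

lemma set_integrable_contrast: "set_integrable lborel {0..T} (\<lambda>t. (cp_model h g \<theta> t - S0 t)\<^sup>2)"
proof -
  have "set_integrable lborel {0..T}
      (\<lambda>t. (cp_model h g \<theta> t)\<^sup>2 - 2 * (cp_model h g \<theta> t * S0 t) + (S0 t)\<^sup>2)"
    by (intro set_integral_add(1) set_integral_diff(1) set_integrable_mult_right
        set_integrable_cp_model_sq set_integrable_cp_model_S0 S0_sq_integrable)
  then show ?thesis by (simp add: power2_eq_square algebra_simps)
qed

lemma Phi_expand:
  "Phi T h g S0 \<theta> = (LINT t:{0..T}|lborel. (cp_model h g \<theta> t)\<^sup>2)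
     - 2 * (LINT t:{0..T}|lborel. cp_model h g \<theta> t * S0 t) + (LINT t:{0..T}|lborel. (S0 t)\<^sup>2)"
proof -
  have "Phi T h g S0 \<theta>
      = (LINT t:{0..T}|lborel. (cp_model h g \<theta> t)\<^sup>2 - 2 * (cp_model h g \<theta> t * S0 t) + (S0 t)\<^sup>2)"
    unfolding Phi_def by (simp add: power2_eq_square algebra_simps)
  also have "\<dots> = (LINT t:{0..T}|lborel. (cp_model h g \<theta> t)\<^sup>2)
      - (LINT t:{0..T}|lborel. 2 * (cp_model h g \<theta> t * S0 t)) + (LINT t:{0..T}|lborel. (S0 t)\<^sup>2)"
    by (simp add: set_integral_add set_integral_diff set_integrable_mult_right
        set_integrable_cp_model_sq set_integrable_cp_model_S0 S0_sq_integrable)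
  finally show ?thesis by simp
qed

definition Phi_d :: "real \<Rightarrow> real" where
  "Phi_d t = (h t - S0 t)\<^sup>2 - (g t - S0 t)\<^sup>2"

lemma Phi_diff_eq:
  assumes "a \<le> b"
  shows "set_integrable lborel {0..T} (\<lambda>t. indicator {a..<b} t * Phi_d t)"
    and "Phi T h g S0 b - Phi T h g S0 a = (LINT t:{0..T}|lborel. indicator {a..<b} t * Phi_d t)"
proof -
  have eq: "(\<lambda>t. (cp_model h g b t - S0 t)\<^sup>2 - (cp_model h g a t - S0 t)\<^sup>2) = (\<lambda>t. indicator {a..<b} t * Phi_d t)"
    using assms by (auto simp: cp_model_def indicator_def Phi_d_def)
  show "set_integrable lborel {0..T} (\<lambda>t. indicator {a..<b} t * Phi_d t)"
    unfolding eq[symmetric] by (intro set_integral_diff(1) set_integrable_contrast)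
  show "Phi T h g S0 b - Phi T h g S0 a = (LINT t:{0..T}|lborel. indicator {a..<b} t * Phi_d t)"
    unfolding Phi_def eq[symmetric] by (intro set_integral_diff(2)[symmetric] set_integrable_contrast)
qed

lemma Phi_diff_ge:
  assumes "0 \<le> a" "a \<le> b" "b \<le> T" "\<And>t. t \<in> {a..<b} \<Longrightarrow> L \<le> Phi_d t"
  shows "L * (b - a) \<le> Phi T h g S0 b - Phi T h g S0 a"
proof -
  have "L * (b - a) = (LINT t:{0..T}|lborel. L * indicator {a..<b} t)"
    by (rule set_integral_const_indicator(2)[symmetric]) (use assms in auto)
  also have "\<dots> \<le> (LINT t:{0..T}|lborel. indicator {a..<b} t * Phi_d t)"
    using assms by (intro set_integral_mono set_integral_const_indicator Phi_diff_eq)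
      (auto simp: indicator_def)
  finally show ?thesis using Phi_diff_eq(2)[OF assms(2)] by simp
qed

lemma Phi_diff_le:
  assumes "0 \<le> a" "a \<le> b" "b \<le> T" "\<And>t. t \<in> {a..<b} \<Longrightarrow> Phi_d t \<le> U"
  shows "Phi T h g S0 b - Phi T h g S0 a \<le> U * (b - a)"
proof -
  have "(LINT t:{0..T}|lborel. indicator {a..<b} t * Phi_d t) \<le> (LINT t:{0..T}|lborel. U * indicator {a..<b} t)"
    using assms by (intro set_integral_mono set_integral_const_indicator Phi_diff_eq)
      (auto simp: indicator_def)
  also have "\<dots> = U * (b - a)"
    by (rule set_integral_const_indicator(2)) (use assms in auto)
  finally show ?thesis using Phi_diff_eq(2)[OF assms(2)] by simp
qed

end

locale change_point_minimum = change_point_contrast +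
  fixes \<alpha> \<beta> \<theta>h \<kappa> :: real and h' g' S0' :: "real \<Rightarrow> real"
  assumes alpha_nonneg: "0 \<le> \<alpha>" and beta_le: "\<beta> \<le> T" and theta_hat: "\<theta>h \<in> {\<alpha><..<\<beta>}"
    and theta_hat_min: "\<And>\<theta>. \<theta> \<in> {\<alpha><..<\<beta>} \<Longrightarrow> \<theta> \<noteq> \<theta>h \<Longrightarrow> Phi T h g S0 \<theta>h < Phi T h g S0 \<theta>"
    and h_deriv: "\<And>t. t \<in> {\<alpha><..<\<beta>} \<Longrightarrow> (h has_real_derivative h' t) (at t)"
    and g_deriv: "\<And>t. t \<in> {\<alpha><..<\<beta>} \<Longrightarrow> (g has_real_derivative g' t) (at t)"
    and S0_deriv: "\<And>t. t \<in> {\<alpha><..<\<beta>} \<Longrightarrow> (S0 has_real_derivative S0' t) (at t)"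
    and kappa_pos: "0 < \<kappa>"
    and Phi_dd_ge: "\<And>t. t \<in> {\<alpha><..<\<beta>} \<Longrightarrow> \<kappa> \<le> Phi_dd h h' g g' S0 S0' t"
begin

lemma Phi_theta_hat_le: "\<theta> \<in> {\<alpha><..<\<beta>} \<Longrightarrow> Phi T h g S0 \<theta>h \<le> Phi T h g S0 \<theta>"
  using theta_hat_min[of \<theta>] by (cases "\<theta> = \<theta>h") auto

lemma Phi_d_has_real_derivative:
  assumes "t \<in> {\<alpha><..<\<beta>}"
  shows "(Phi_d has_real_derivative Phi_dd h h' g g' S0 S0' t) (at t)"
proof -
  have "((\<lambda>t. (h t - S0 t) * (h t - S0 t) - (g t - S0 t) * (g t - S0 t)) has_real_derivative
      (h' t - S0' t) * (h t - S0 t) + (h' t - S0' t) * (h t - S0 t)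
      - ((g' t - S0' t) * (g t - S0 t) + (g' t - S0' t) * (g t - S0 t))) (at t)"
    using h_deriv g_deriv S0_deriv assms by (intro derivative_intros) auto
  then show ?thesis unfolding Phi_d_def Phi_dd_def power2_eq_square by (simp add: algebra_simps)
qed

lemma Phi_d_increase:
  assumes "s \<in> {\<alpha><..<\<beta>}" "t \<in> {\<alpha><..<\<beta>}" "s \<le> t"
  shows "\<kappa> * (t - s) \<le> Phi_d t - Phi_d s"
proof -
  have "Phi_d s - \<kappa> * s \<le> Phi_d t - \<kappa> * t"
  proof (rule DERIV_nonneg_imp_nondecreasing[OF assms(3)])
    fix x assume "s \<le> x" "x \<le> t"
    then have x: "x \<in> {\<alpha><..<\<beta>}" using assms by auto
    have "((\<lambda>x. Phi_d x - \<kappa> * x) has_real_derivative Phi_dd h h' g g' S0 S0' x - \<kappa> * 1) (at x)"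
      by (intro DERIV_diff Phi_d_has_real_derivative[OF x] DERIV_cmult DERIV_ident)
    then show "\<exists>y. ((\<lambda>x. Phi_d x - \<kappa> * x) has_real_derivative y) (at x) \<and> 0 \<le> y"
      using Phi_dd_ge[OF x] by auto
  qed
  then show ?thesis by (simp add: algebra_simps)
qed

lemma Phi_d_pos:
  assumes t: "t \<in> {\<alpha><..<\<beta>}" "\<theta>h < t"
  shows "0 < Phi_d t"
proof -
  have "Phi T h g S0 t - Phi T h g S0 \<theta>h \<le> Phi_d t * (t - \<theta>h)"
  proof (rule Phi_diff_le)
    fix x assume x: "x \<in> {\<theta>h..<t}"
    then have "\<kappa> * (t - x) \<le> Phi_d t - Phi_d x" using theta_hat t by (intro Phi_d_increase) auto
    moreover have "0 \<le> \<kappa> * (t - x)" using x kappa_pos by simp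
    ultimately show "Phi_d x \<le> Phi_d t" by linarith
  qed (use theta_hat t alpha_nonneg beta_le in auto)
  moreover have "Phi T h g S0 \<theta>h < Phi T h g S0 t" using theta_hat_min t by auto
  ultimately have "0 < Phi_d t * (t - \<theta>h)" by linarith
  then show ?thesis using t(2) by (simp add: zero_less_mult_iff)
qed

lemma Phi_d_neg:
  assumes t: "t \<in> {\<alpha><..<\<beta>}" "t < \<theta>h"
  shows "Phi_d t < 0"
proof -
  have "Phi_d t * (\<theta>h - t) \<le> Phi T h g S0 \<theta>h - Phi T h g S0 t"
  proof (rule Phi_diff_ge)
    fix x assume x: "x \<in> {t..<\<theta>h}"
    then have "\<kappa> * (x - t) \<le> Phi_d x - Phi_d t" using theta_hat t by (intro Phi_d_increase) auto
    moreover have "0 \<le> \<kappa> * (x - t)" using x kappa_pos by simp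
    ultimately show "Phi_d t \<le> Phi_d x" by linarith
  qed (use theta_hat t alpha_nonneg beta_le in auto)
  moreover have "Phi T h g S0 \<theta>h < Phi T h g S0 t" using theta_hat_min t by auto
  ultimately have "Phi_d t * (\<theta>h - t) < 0" by linarith
  then show ?thesis using t(2) by (simp add: mult_less_0_iff)
qed

text \<open>The quarter and half points between \<open>\<theta>h\<close> and \<open>\<theta>\<close> turn the sign of \<open>Phi_d\<close> at the
  quarter point and its growth rate \<open>\<kappa>\<close> into a lower bound for \<open>Phi_d\<close> on the far half.\<close>
lemma Phi_quadratic_growth:
  assumes \<theta>: "\<theta> \<in> {\<alpha><..<\<beta>}"
  shows "\<kappa> / 8 * (\<theta> - \<theta>h)\<^sup>2 \<le> Phi T h g S0 \<theta> - Phi T h g S0 \<theta>h"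
proof (cases "\<theta>h < \<theta>")
  case True
  define q where "q = (\<theta> - \<theta>h) / 4"
  have q: "0 < q" "\<theta>h + q \<in> {\<alpha><..<\<beta>}" "\<theta>h + 2 * q \<in> {\<alpha><..<\<beta>}"
    using True theta_hat \<theta> by (auto simp: q_def field_simps)
  have "\<kappa> * q * (\<theta> - (\<theta>h + 2 * q)) \<le> Phi T h g S0 \<theta> - Phi T h g S0 (\<theta>h + 2 * q)"
  proof (rule Phi_diff_ge)
    fix x assume x: "x \<in> {\<theta>h + 2 * q..<\<theta>}"
    then have "\<kappa> * (x - (\<theta>h + q)) \<le> Phi_d x - Phi_d (\<theta>h + q)"
      using q \<theta> by (intro Phi_d_increase) auto
    moreover have "\<kappa> * q \<le> \<kappa> * (x - (\<theta>h + q))" using x kappa_pos by (intro mult_left_mono) auto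
    ultimately show "\<kappa> * q \<le> Phi_d x" using Phi_d_pos[OF q(2)] q(1) by linarith
  qed (use q \<theta> alpha_nonneg beta_le in \<open>auto simp: q_def field_simps\<close>)
  moreover have "\<kappa> * q * (\<theta> - (\<theta>h + 2 * q)) = \<kappa> / 8 * (\<theta> - \<theta>h)\<^sup>2"
    by (simp add: q_def power2_eq_square field_simps)
  ultimately show ?thesis using Phi_theta_hat_le[OF q(3)] by linarith
next
  case False
  define q where "q = (\<theta>h - \<theta>) / 4"
  show ?thesis
  proof (cases "\<theta> = \<theta>h")
    case False
    then have q: "0 < q" "\<theta>h - q \<in> {\<alpha><..<\<beta>}" "\<theta>h - 2 * q \<in> {\<alpha><..<\<beta>}"
      using \<open>\<not> \<theta>h < \<theta>\<close> theta_hat \<theta> by (auto simp: q_def field_simps)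
    have "Phi T h g S0 (\<theta>h - 2 * q) - Phi T h g S0 \<theta> \<le> - \<kappa> * q * (\<theta>h - 2 * q - \<theta>)"
    proof (rule Phi_diff_le)
      fix x assume x: "x \<in> {\<theta>..<\<theta>h - 2 * q}"
      then have "\<kappa> * (\<theta>h - q - x) \<le> Phi_d (\<theta>h - q) - Phi_d x"
        using q \<theta> by (intro Phi_d_increase) auto
      moreover have "\<kappa> * q \<le> \<kappa> * (\<theta>h - q - x)" using x kappa_pos by (intro mult_left_mono) auto
      ultimately show "Phi_d x \<le> - \<kappa> * q" using Phi_d_neg[OF q(2)] q(1) by linarith
    qed (use q \<theta> alpha_nonneg beta_le in \<open>auto simp: q_def field_simps\<close>)
    moreover have "\<kappa> * q * (\<theta>h - 2 * q - \<theta>) = \<kappa> / 8 * (\<theta> - \<theta>h)\<^sup>2"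
      by (simp add: q_def power2_eq_square field_simps)
    ultimately show ?thesis using Phi_theta_hat_le[OF q(3)] by linarith
  qed simp
qed

end

section \<open>Moments of the normalised likelihood ratio\<close>

context change_point_contrast
begin

lemma cp_model_L2_dist_le:
  "(\<integral>\<^sup>+ t. indicator {0..T} t * ennreal ((cp_model h g \<theta>\<^sub>1 t - cp_model h g \<theta>\<^sub>2 t)\<^sup>2) \<partial>lborel)
     \<le> ennreal ((2 * B)\<^sup>2 * \<bar>\<theta>\<^sub>1 - \<theta>\<^sub>2\<bar>)"
proof -
  define lo hi where "lo = min \<theta>\<^sub>1 \<theta>\<^sub>2" and "hi = max \<theta>\<^sub>1 \<theta>\<^sub>2"
  have "(\<integral>\<^sup>+ t. indicator {0..T} t * ennreal ((cp_model h g \<theta>\<^sub>1 t - cp_model h g \<theta>\<^sub>2 t)\<^sup>2) \<partial>lborel)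
      \<le> (\<integral>\<^sup>+ t. ennreal ((2 * B)\<^sup>2) * indicator {lo..<hi} t \<partial>lborel)"
  proof (intro nn_integral_mono)
    fix t
    show "indicator {0..T} t * ennreal ((cp_model h g \<theta>\<^sub>1 t - cp_model h g \<theta>\<^sub>2 t)\<^sup>2)
        \<le> ennreal ((2 * B)\<^sup>2) * indicator {lo..<hi} t"
    proof (cases "t \<in> {0..T} \<and> t \<in> {lo..<hi}")
      case True
      then have "\<bar>cp_model h g \<theta>\<^sub>1 t - cp_model h g \<theta>\<^sub>2 t\<bar> \<le> 2 * B"
        using cp_model_bound[of t \<theta>\<^sub>1] cp_model_bound[of t \<theta>\<^sub>2] by linarith
      then have "(cp_model h g \<theta>\<^sub>1 t - cp_model h g \<theta>\<^sub>2 t)\<^sup>2 \<le> (2 * B)\<^sup>2"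
        by (metis abs_ge_zero power2_abs power_mono)
      then show ?thesis using True by (simp add: ennreal_leI)
    next
      case False
      moreover have "cp_model h g \<theta>\<^sub>1 t = cp_model h g \<theta>\<^sub>2 t" if "t \<notin> {lo..<hi}"
        using that by (auto simp: lo_def hi_def cp_model_def)
      ultimately show ?thesis by (auto simp: indicator_def)
    qed
  qed
  also have "\<dots> = ennreal ((2 * B)\<^sup>2 * \<bar>\<theta>\<^sub>1 - \<theta>\<^sub>2\<bar>)"
  proof -
    have "lo \<le> hi" "hi - lo = \<bar>\<theta>\<^sub>1 - \<theta>\<^sub>2\<bar>" by (auto simp: lo_def hi_def)
    then show ?thesis by (simp add: ennreal_mult nn_integral_cmult_indicator)
  qed
  finally show ?thesis .
qed

lemma pseudo_lik_ratio:
  assumes "\<epsilon> \<noteq> 0"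
  shows "pseudo_lik T h g S0 \<epsilon> I \<theta>\<^sub>1 \<omega> / pseudo_lik T h g S0 \<epsilon> I \<theta>\<^sub>2 \<omega>
    = exp (- (Phi T h g S0 \<theta>\<^sub>1 - Phi T h g S0 \<theta>\<^sub>2) / (2 * \<epsilon>\<^sup>2) + (I \<theta>\<^sub>1 \<omega> - I \<theta>\<^sub>2 \<omega>) / \<epsilon>)"
  unfolding pseudo_lik_def exp_diff[symmetric] Phi_expand
  using assms by (simp add: field_simps power2_eq_square)

lemma Z_hat_moment_le:
  assumes W: "wiener_process P W" and I: "\<And>\<theta>. wiener_integral P W T (cp_model h g \<theta>) (I \<theta>)"
    and "0 < \<epsilon>"
  defines "a \<equiv> \<epsilon> powr (2/3)"
  shows "(\<integral>\<^sup>+ \<omega>. ennreal (Z_hat T h g S0 \<epsilon> I \<theta>h u \<omega> powr p) \<partial>P)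
    \<le> ennreal (exp (- p * a / (2 * \<epsilon>\<^sup>2) * (Phi T h g S0 (\<theta>h + a * u) - Phi T h g S0 \<theta>h)
                      + (p * a / \<epsilon>)\<^sup>2 * ((2 * B)\<^sup>2 * \<bar>a * u\<bar>)))"
proof -
  define \<theta> where "\<theta> = \<theta>h + a * u"
  define A where "A = - p * a / (2 * \<epsilon>\<^sup>2) * (Phi T h g S0 \<theta> - Phi T h g S0 \<theta>h)"
  have [measurable]: "I \<theta>' \<in> borel_measurable P" for \<theta>'
    using I unfolding wiener_integral_def by blast
  have "Z_hat T h g S0 \<epsilon> I \<theta>h u \<omega> powr p = exp A * exp (p * a / \<epsilon> * (I \<theta> \<omega> - I \<theta>h \<omega>))" for \<omega>
    unfolding Z_hat_def Z_eps_def pseudo_lik_ratio[OF \<open>0 < \<epsilon>\<close>[THEN less_imp_neq, symmetric]]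
      a_def[symmetric] \<theta>_def[symmetric] A_def
    by (simp add: exp_powr_real exp_add[symmetric] field_simps) (simp add: add_divide_distrib[symmetric])
  then have "(\<integral>\<^sup>+ \<omega>. ennreal (Z_hat T h g S0 \<epsilon> I \<theta>h u \<omega> powr p) \<partial>P)
      = ennreal (exp A) * (\<integral>\<^sup>+ \<omega>. ennreal (exp (p * a / \<epsilon> * (I \<theta> \<omega> - I \<theta>h \<omega>))) \<partial>P)"
    by (simp add: ennreal_mult nn_integral_cmult)
  also have "\<dots> \<le> ennreal (exp A) * ennreal (exp ((p * a / \<epsilon>)\<^sup>2 * ((2 * B)\<^sup>2 * \<bar>\<theta> - \<theta>h\<bar>)))"
    by (intro mult_left_mono wiener_integral_diff_exp_moment_le[OF W I I cp_model_meas cp_model_meas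
        cp_model_L2_dist_le]) simp_all
  finally show ?thesis by (simp add: A_def \<theta>_def ennreal_mult[symmetric] exp_add[symmetric])
qed

end

context change_point_minimum
begin

lemma Z_hat_moment_le_exp_sq:
  assumes W: "wiener_process P W" and I: "\<And>\<theta>. wiener_integral P W T (cp_model h g \<theta>) (I \<theta>)"
    and \<epsilon>: "0 < \<epsilon>" and p: "0 < p"
    and u: "(\<alpha> - \<theta>h) * \<epsilon> powr (-2/3) < u" "u < (\<beta> - \<theta>h) * \<epsilon> powr (-2/3)"
    and large: "128 * p * B\<^sup>2 / \<kappa> \<le> \<bar>u\<bar>"
  shows "(\<integral>\<^sup>+ \<omega>. ennreal (Z_hat T h g S0 \<epsilon> I \<theta>h u \<omega> powr p) \<partial>P) \<le> ennreal (exp (- (p * \<kappa> / 32) * u\<^sup>2))"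
proof -
  define a where "a = \<epsilon> powr (2/3)"
  have "a ^ 3 = \<epsilon> powr (real 3 * (2/3))"
    unfolding a_def using \<epsilon> by (intro powr_power) simp
  then have a: "0 < a" "a ^ 3 = \<epsilon>\<^sup>2"
    using \<epsilon> by (simp_all add: a_def)
  have "\<epsilon> powr (-2/3) = inverse a" by (simp add: a_def powr_minus[symmetric])
  with u have "(\<alpha> - \<theta>h) * inverse a < u" "u < (\<beta> - \<theta>h) * inverse a" by simp_all
  then have \<theta>: "\<theta>h + a * u \<in> {\<alpha><..<\<beta>}" using a(1) by (simp add: field_simps)
  have "- p * a / (2 * \<epsilon>\<^sup>2) * (Phi T h g S0 (\<theta>h + a * u) - Phi T h g S0 \<theta>h)
      \<le> - p * a / (2 * \<epsilon>\<^sup>2) * (\<kappa> / 8 * (a * u)\<^sup>2)"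
    using Phi_quadratic_growth[OF \<theta>] p a \<epsilon> by (intro mult_left_mono_neg) simp_all
  also have "\<dots> = - (p * \<kappa> / 16) * u\<^sup>2"
    using a \<epsilon> by (simp add: field_simps power2_eq_square power3_eq_cube)
  finally have drift: "- p * a / (2 * \<epsilon>\<^sup>2) * (Phi T h g S0 (\<theta>h + a * u) - Phi T h g S0 \<theta>h)
      \<le> - (p * \<kappa> / 16) * u\<^sup>2" .
  have "(p * a / \<epsilon>)\<^sup>2 * ((2 * B)\<^sup>2 * \<bar>a * u\<bar>) = 4 * p\<^sup>2 * B\<^sup>2 * \<bar>u\<bar>"
    using a \<epsilon> by (simp add: abs_mult field_simps power2_eq_square power3_eq_cube)
  also have "\<dots> \<le> (p * \<kappa> / 32) * u\<^sup>2"
  proof -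
    have "128 * p * B\<^sup>2 \<le> \<kappa> * \<bar>u\<bar>" using large kappa_pos by (simp add: field_simps)
    then have "p * \<bar>u\<bar> * (128 * p * B\<^sup>2) \<le> p * \<bar>u\<bar> * (\<kappa> * \<bar>u\<bar>)"
      using p by (intro mult_left_mono) simp_all
    then show ?thesis by (simp add: power2_eq_square abs_mult_self_eq field_simps)
  qed
  finally have "- p * a / (2 * \<epsilon>\<^sup>2) * (Phi T h g S0 (\<theta>h + a * u) - Phi T h g S0 \<theta>h)
      + (p * a / \<epsilon>)\<^sup>2 * ((2 * B)\<^sup>2 * \<bar>a * u\<bar>) \<le> - (p * \<kappa> / 32) * u\<^sup>2"
    using drift by linarith
  with Z_hat_moment_le[OF W I \<epsilon>, of \<theta>h u p] show ?thesis
    unfolding a_def by (meson ennreal_leI exp_le_cancel_iff order.trans)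
qed

end

theorem lemma3:
  fixes P :: "'a measure" and W :: "real \<Rightarrow> 'a \<Rightarrow> real" and I :: "real \<Rightarrow> 'a \<Rightarrow> real"
    and T \<alpha> \<beta> theta0 \<theta>h :: real
    and h g h' g' S0 S0' :: "real \<Rightarrow> real"
  assumes "0 < T" "0 < \<alpha>" "\<alpha> < \<beta>" "\<beta> < T"
    and "theta0 \<in> {\<alpha><..<\<beta>}"
    and "wiener_process P W"
    and "set_borel_measurable lborel {0..T} S0"
    and "set_integrable lborel {0..T} (\<lambda>t. (S0 t)^2)"
    and "set_borel_measurable lborel {0..T} h" "bounded (h ` {0..T})"
    and "set_borel_measurable lborel {0..T} g" "bounded (g ` {0..T})"
    and "\<forall>\<theta>. wiener_integral P W T (cp_model h g \<theta>) (I \<theta>)"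
    and M1: "\<exists>\<kappa>>0. \<forall>t\<in>{\<alpha><..<\<beta>}. h t - g t \<ge> \<kappa>"
    and M2: "\<theta>h \<in> {\<alpha><..<\<beta>}"
      "\<forall>\<theta>\<in>{\<alpha><..<\<beta>}. \<theta> \<noteq> \<theta>h \<longrightarrow> Phi T h g S0 \<theta>h < Phi T h g S0 \<theta>"
    and M3: "\<forall>t\<in>{\<alpha><..<\<beta>}. (h has_real_derivative h' t) (at t)" "continuous_on {\<alpha><..<\<beta>} h'"
      "\<forall>t\<in>{\<alpha><..<\<beta>}. (g has_real_derivative g' t) (at t)" "continuous_on {\<alpha><..<\<beta>} g'"
      "\<forall>t\<in>{\<alpha><..<\<beta>}. (S0 has_real_derivative S0' t) (at t)" "continuous_on {\<alpha><..<\<beta>} S0'"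
    and M4: "\<exists>\<kappa>>0. \<forall>\<theta>\<in>{\<alpha><..<\<beta>}. Phi_dd h h' g g' S0 S0' \<theta> \<ge> \<kappa>"
  shows "\<forall>p>0. \<exists>c>0. \<exists>d>0. \<forall>\<epsilon>\<in>{0<..1}. \<forall>u.
           (\<alpha> - \<theta>h) * \<epsilon> powr (-2/3) < u \<and> u < (\<beta> - \<theta>h) * \<epsilon> powr (-2/3) \<and> \<bar>u\<bar> \<ge> d \<longrightarrow>
           (\<integral>\<^sup>+ \<omega>. ennreal ((Z_hat T h g S0 \<epsilon> I \<theta>h u \<omega>) powr p) \<partial>P) \<le> ennreal (exp (- c * u^2))"
proof (intro allI impI)
  fix p :: real assume p: "0 < p"
  obtain \<kappa> where \<kappa>: "0 < \<kappa>" "\<And>\<theta>. \<theta> \<in> {\<alpha><..<\<beta>} \<Longrightarrow> \<kappa> \<le> Phi_dd h h' g g' S0 S0' \<theta>"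
    using M4 by blast
  obtain B where B: "1 \<le> B" "\<And>t. t \<in> {0..T} \<Longrightarrow> \<bar>h t\<bar> \<le> B" "\<And>t. t \<in> {0..T} \<Longrightarrow> \<bar>g t\<bar> \<le> B"
    using bounded_imp_common_abs_bound[OF assms(10,12)] by blast
  interpret change_point_minimum T h g S0 B \<alpha> \<beta> \<theta>h \<kappa> h' g' S0'
  proof
    show "0 \<le> \<alpha>" "\<beta> \<le> T" using assms(2,4) by simp_all
  qed (use assms(7-9,11) B M2 M3(1,3,5) \<kappa> in simp_all)
  have "0 < p * \<kappa> / 32" "0 < 128 * p * B\<^sup>2 / \<kappa>" using p \<kappa> B by auto
  with Z_hat_moment_le_exp_sq[OF assms(6,13)[rule_format] _ p]
  show "\<exists>c>0. \<exists>d>0. \<forall>\<epsilon>\<in>{0<..1}. \<forall>u. (\<alpha> - \<theta>h) * \<epsilon> powr (-2/3) < u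
      \<and> u < (\<beta> - \<theta>h) * \<epsilon> powr (-2/3) \<and> \<bar>u\<bar> \<ge> d \<longrightarrow>
      (\<integral>\<^sup>+ \<omega>. ennreal ((Z_hat T h g S0 \<epsilon> I \<theta>h u \<omega>) powr p) \<partial>P) \<le> ennreal (exp (- c * u^2))"
    by (metis greaterThanAtMost_iff)
qed

end
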